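(* Let $\|\cdot\|$ be a norm on $\mathbb{B}(\mathcal{H})$ which is an $L$-norm or an $M$-norm. Then $\|EAE\|\le\|A\|$ for every (orthogonal) projection $E\in\mathbb{B}(\mathcal{H})$ and every $A\in\mathbb{B}(\mathcal{H})$.
   Context: $\mathbb{B}(\mathcal{H})$ is the algebra of bounded operators on a Hilbert space $\mathcal{H}$ with identity $I$. A norm $\|\cdot\|$ on $\mathbb{B}(\mathcal{H})$ is an $M$-norm if $\left\|\sum_{i=1}^k C_i^*X_iC_i\right\|\le \max_{1\le i\le k}\|X_i\|$ for all $k$, all $X_i\in\mathbb{B}(\mathcal{H})$ and all $C_i\in\mathbb{B}(\mathcal{H})$ with $\sum_{i=1}^k C_i^*C_i=I$. It is an $L$-norm if $\sum_{i=1}^k\|C_iXC_i^*\|\le\|X\|$ for all $k$, all $X\in\mathbb{B}(\mathcal{H})$ and all $C_i$ with $\sum_{i=1}^k C_i^*C_i=I$. *)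

theory Defs
  imports Complex_Main
begin

class chilbert_space = banach +
  fixes scaleC :: "complex \<Rightarrow> 'a \<Rightarrow> 'a"
    and cinner :: "'a \<Rightarrow> 'a \<Rightarrow> complex"
  assumes scaleC_add_right: "scaleC a (x + y) = scaleC a x + scaleC a y"
    and scaleC_add_left: "scaleC (a + b) x = scaleC a x + scaleC b x"
    and scaleC_scaleC: "scaleC a (scaleC b x) = scaleC (a * b) x"
    and scaleC_one: "scaleC 1 x = x"
    and scaleR_scaleC: "scaleR r x = scaleC (complex_of_real r) x"
    and cinner_commute: "cinner x y = cnj (cinner y x)"
    and cinner_add_right: "cinner x (y + z) = cinner x y + cinner x z"
    and cinner_scaleC_right: "cinner x (scaleC a y) = a * cinner x y"
    and cinner_self_real: "Im (cinner x x) = 0"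
    and cinner_self_nonneg: "0 \<le> Re (cinner x x)"
    and cinner_self_zero: "cinner x x = 0 \<longleftrightarrow> x = 0"
    and norm_cinner: "norm x = sqrt (Re (cinner x x))"

definition bops :: "('a::chilbert_space \<Rightarrow> 'a) set" where
  "bops = {T. (\<forall>x y. T (x + y) = T x + T y) \<and> (\<forall>c x. T (scaleC c x) = scaleC c (T x))
              \<and> (\<exists>K. \<forall>x. norm (T x) \<le> K * norm x)}"

definition adj :: "('a::chilbert_space \<Rightarrow> 'a) \<Rightarrow> ('a \<Rightarrow> 'a)" where
  "adj T = (SOME S. S \<in> bops \<and> (\<forall>x y. cinner (T x) y = cinner x (S y)))"

definition is_bop_norm :: "(('a::chilbert_space \<Rightarrow> 'a) \<Rightarrow> real) \<Rightarrow> bool" where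
  "is_bop_norm N \<longleftrightarrow>
     (\<forall>T\<in>bops. 0 \<le> N T) \<and>
     (\<forall>T\<in>bops. N T = 0 \<longleftrightarrow> T = (\<lambda>x. 0)) \<and>
     (\<forall>T\<in>bops. \<forall>c. N (\<lambda>x. scaleC c (T x)) = cmod c * N T) \<and>
     (\<forall>T\<in>bops. \<forall>S\<in>bops. N (\<lambda>x. T x + S x) \<le> N T + N S)"

definition is_M_norm :: "(('a::chilbert_space \<Rightarrow> 'a) \<Rightarrow> real) \<Rightarrow> bool" where
  "is_M_norm N \<longleftrightarrow>
     (\<forall>(k::nat) (X::nat \<Rightarrow> 'a \<Rightarrow> 'a) (C::nat \<Rightarrow> 'a \<Rightarrow> 'a).
        k \<ge> 1 \<and> (\<forall>i<k. X i \<in> bops \<and> C i \<in> bops) \<and>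
        (\<forall>x. (\<Sum>i<k. adj (C i) (C i x)) = x) \<longrightarrow>
        N (\<lambda>x. \<Sum>i<k. adj (C i) (X i (C i x))) \<le> Max ((\<lambda>i. N (X i)) ` {..<k}))"

definition is_L_norm :: "(('a::chilbert_space \<Rightarrow> 'a) \<Rightarrow> real) \<Rightarrow> bool" where
  "is_L_norm N \<longleftrightarrow>
     (\<forall>(k::nat) (X::'a \<Rightarrow> 'a) (C::nat \<Rightarrow> 'a \<Rightarrow> 'a).
        X \<in> bops \<and> (\<forall>i<k. C i \<in> bops) \<and>
        (\<forall>x. (\<Sum>i<k. adj (C i) (C i x)) = x) \<longrightarrow>
        (\<Sum>i<k. N (\<lambda>x. C i (X (adj (C i) x)))) \<le> N X)"

end

theory Submission
  imports Defs
begin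

text \<open>Write \<open>F = I - E\<close>. Then \<open>E\<^sup>*E + F\<^sup>*F = I\<close>, so for an L-norm the single term \<open>\<parallel>EAE\<parallel>\<close> of
  \<open>\<parallel>EAE\<parallel> + \<parallel>FAF\<parallel> \<le> \<parallel>A\<parallel>\<close> is bounded by \<open>\<parallel>A\<parallel>\<close>, and for an M-norm
  \<open>\<parallel>E\<^sup>*AE + F\<^sup>*0F\<parallel> \<le> max \<parallel>A\<parallel> \<parallel>0\<parallel> = \<parallel>A\<parallel>\<close>. Any family \<open>C\<close> with \<open>C 0 = E\<close> and \<open>\<Sum> C\<^sub>i\<^sup>*C\<^sub>i = I\<close>
  serves equally well.\<close>

lemma scaleC_zero_right: "scaleC c (0::'a::chilbert_space) = 0"
proof -
  have "scaleC c ((0::'a) + 0) = scaleC c 0 + scaleC c 0" by (rule scaleC_add_right)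
  thus ?thesis by simp
qed

lemma scaleC_minus_right: "scaleC c (- (x::'a::chilbert_space)) = - scaleC c x"
proof -
  have "scaleC c (x + - x) = scaleC c x + scaleC c (-x)" by (rule scaleC_add_right)
  hence "scaleC c x + scaleC c (-x) = 0" by (simp add: scaleC_zero_right)
  thus ?thesis by (rule add.inverse_unique[symmetric])
qed

lemma scaleC_diff_right: "scaleC c ((x::'a::chilbert_space) - y) = scaleC c x - scaleC c y"
  using scaleC_add_right[of c x "- y"] by (simp add: scaleC_minus_right)

lemma cinner_diff_right: "cinner (x::'a::chilbert_space) (y - z) = cinner x y - cinner x z"
  using cinner_add_right[of x "y - z" z] by simp

lemma cinner_zero_right: "cinner (x::'a::chilbert_space) 0 = 0"
  using cinner_diff_right[of x 0 0] by simp

lemma cinner_minus_right: "cinner (x::'a::chilbert_space) (- y) = - cinner x y"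
  using cinner_diff_right[of x 0 y] by (simp add: cinner_zero_right)

lemma cinner_diff_left: "cinner ((x::'a::chilbert_space) - y) z = cinner x z - cinner y z"
  by (metis cinner_commute cinner_diff_right complex_cnj_diff)

lemma cinner_minus_left: "cinner (- (x::'a::chilbert_space)) y = - cinner x y"
  by (metis cinner_commute cinner_minus_right complex_cnj_minus)

lemma cinner_eq_right_imp_eq:
  assumes "\<And>x. cinner x a = cinner x (b::'a::chilbert_space)"
  shows "a = b"
  using assms[of "a - b"] cinner_self_zero[of "a - b"] by (simp add: cinner_diff_right)

lemma bops_add: "T \<in> bops \<Longrightarrow> T (x + y) = T x + T y"
  by (simp add: bops_def)

lemma bops_zero: "T \<in> bops \<Longrightarrow> T 0 = 0"
  using bops_add[of T 0 0] by simp

lemma bops_minus: "T \<in> bops \<Longrightarrow> T (- x) = - T x"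
  using bops_add[of T x "- x"] bops_zero[of T] by (simp add: add.inverse_unique)

lemma bops_diff: "T \<in> bops \<Longrightarrow> T (x - y) = T x - T y"
  using bops_add[of T x "- y"] bops_minus[of T y] by simp

lemma bops_comp:
  assumes "S \<in> bops" "T \<in> bops"
  shows "(\<lambda>x. S (T x)) \<in> bops"
proof -
  obtain K where K: "\<And>x. norm (S x) \<le> K * norm x" using assms(1) by (auto simp: bops_def)
  obtain L where L: "\<And>x. norm (T x) \<le> L * norm x" using assms(2) by (auto simp: bops_def)
  have "norm (S (T x)) \<le> (\<bar>K\<bar> * \<bar>L\<bar>) * norm x" for x
  proof -
    have "norm (S (T x)) \<le> \<bar>K\<bar> * norm (T x)"
      using K[of "T x"] by (meson abs_ge_self mult_right_mono norm_ge_zero order_trans)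
    also have "\<dots> \<le> \<bar>K\<bar> * (\<bar>L\<bar> * norm x)"
      using L[of x] by (meson abs_ge_self abs_ge_zero mult_left_mono mult_right_mono
          norm_ge_zero order_trans)
    finally show ?thesis by simp
  qed
  thus ?thesis using assms by (auto simp: bops_def)
qed

lemma id_in_bops: "(\<lambda>x::'a::chilbert_space. x) \<in> bops"
  unfolding bops_def by (auto intro: exI[of _ 1])

lemma zero_in_bops: "(\<lambda>x::'a::chilbert_space. 0) \<in> bops"
  unfolding bops_def by (auto simp: scaleC_zero_right intro: exI[of _ 0])

lemma bops_uminus: "T \<in> bops \<Longrightarrow> (\<lambda>x. - T x) \<in> bops"
  by (auto simp: bops_def scaleC_minus_right)

lemma bops_id_minus:
  assumes "T \<in> bops"
  shows "(\<lambda>x. x - T x) \<in> bops"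
proof -
  obtain K where K: "\<And>x. norm (T x) \<le> K * norm x" using assms by (auto simp: bops_def)
  have "norm (x - T x) \<le> (1 + K) * norm x" for x
    using norm_triangle_ineq4[of x "T x"] K[of x] by (simp add: distrib_right)
  thus ?thesis using assms by (auto simp: bops_def scaleC_diff_right)
qed

definition has_adjoint :: "('a::chilbert_space \<Rightarrow> 'a) \<Rightarrow> bool" where
  "has_adjoint T \<longleftrightarrow> (\<exists>S. S \<in> bops \<and> (\<forall>x y. cinner (T x) y = cinner x (S y)))"

lemma has_adjointD:
  assumes "has_adjoint T"
  shows "adj T \<in> bops" "cinner (T x) y = cinner x (adj T y)"
proof -
  have "adj T \<in> bops \<and> (\<forall>x y. cinner (T x) y = cinner x (adj T y))"
    using assms unfolding has_adjoint_def adj_def by (rule someI_ex)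
  thus "adj T \<in> bops" "cinner (T x) y = cinner x (adj T y)" by auto
qed

lemma adj_eqI:
  assumes "S \<in> bops" "\<And>x y. cinner (T x) y = cinner x (S y)"
  shows "adj T = S"
proof
  fix y
  have "has_adjoint T" using assms unfolding has_adjoint_def by blast
  show "adj T y = S y"
    by (rule cinner_eq_right_imp_eq) (metis assms(2) has_adjointD(2)[OF \<open>has_adjoint T\<close>])
qed

lemma adj_id: "adj (\<lambda>x::'a::chilbert_space. x) = (\<lambda>x. x)"
  by (rule adj_eqI[OF id_in_bops]) simp

lemma has_adjoint_uminus:
  assumes "has_adjoint T"
  shows "has_adjoint (\<lambda>x. - T x)"
  using bops_uminus[OF has_adjointD(1)[OF assms]] has_adjointD(2)[OF assms]
  unfolding has_adjoint_def by (auto simp: cinner_minus_left cinner_minus_right)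

text \<open>Without a genuine adjoint, \<open>adj T\<close> and \<open>adj (-T)\<close> are the same \<open>SOME\<close> over an empty
  predicate, hence equal.\<close>

lemma adj_uminus_no_adjoint:
  assumes "\<not> has_adjoint T"
  shows "adj (\<lambda>x. - T x) = adj T"
proof -
  have "has_adjoint (\<lambda>x. - T x) \<Longrightarrow> has_adjoint T"
    using has_adjoint_uminus[of "\<lambda>x. - T x"] by simp
  thus ?thesis using assms unfolding adj_def has_adjoint_def by metis
qed

lemma bop_norm_nonneg: "is_bop_norm N \<Longrightarrow> T \<in> bops \<Longrightarrow> 0 \<le> N T"
  unfolding is_bop_norm_def by blast

lemma bop_norm_zero: "is_bop_norm N \<Longrightarrow> N (\<lambda>x. 0) = 0"
  using zero_in_bops unfolding is_bop_norm_def by blast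

lemma is_L_normD:
  fixes k :: nat
  assumes "is_L_norm N" "X \<in> bops" "\<forall>i<k. C i \<in> bops"
    "\<forall>x. (\<Sum>i<k. adj (C i) (C i x)) = x"
  shows "(\<Sum>i<k. N (\<lambda>x. C i (X (adj (C i) x)))) \<le> N X"
  using assms unfolding is_L_norm_def by blast

lemma is_M_normD:
  fixes k :: nat
  assumes "is_M_norm N" "k \<ge> 1" "\<forall>i<k. X i \<in> bops \<and> C i \<in> bops"
    "\<forall>x. (\<Sum>i<k. adj (C i) (C i x)) = x"
  shows "N (\<lambda>x. \<Sum>i<k. adj (C i) (X i (C i x))) \<le> Max ((\<lambda>i. N (X i)) ` {..<k})"
  using assms unfolding is_M_norm_def by blast

lemma L_norm_term_le:
  fixes k :: nat
  assumes "is_bop_norm N" "is_L_norm N" "A \<in> bops"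
    and C: "\<forall>i<k. C i \<in> bops \<and> adj (C i) \<in> bops"
    and unit: "\<forall>x. (\<Sum>i<k. adj (C i) (C i x)) = x"
    and "j < k"
  shows "N (\<lambda>x. C j (A (adj (C j) x))) \<le> N A"
proof -
  let ?t = "\<lambda>i. N (\<lambda>x. C i (A (adj (C i) x)))"
  have "0 \<le> ?t i" if "i < k" for i
    using C that bop_norm_nonneg[OF assms(1) bops_comp[OF _ bops_comp[OF assms(3)]]] by blast
  hence "?t j \<le> (\<Sum>i<k. ?t i)"
    using \<open>j < k\<close> by (intro member_le_sum) simp_all
  also have "\<dots> \<le> N A"
    using is_L_normD[OF assms(2,3)] C unit by blast
  finally show ?thesis .
qed

lemma M_norm_term_le:
  fixes k :: nat
  assumes "is_bop_norm N" "is_M_norm N" "A \<in> bops"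
    and C: "\<forall>i<k. C i \<in> bops \<and> adj (C i) \<in> bops"
    and unit: "\<forall>x. (\<Sum>i<k. adj (C i) (C i x)) = x"
    and "j < k"
  shows "N (\<lambda>x. adj (C j) (A (C j x))) \<le> N A"
proof -
  define X where "X = (\<lambda>i. if i = j then A else (\<lambda>x. 0))"
  have "(\<lambda>x. \<Sum>i<k. adj (C i) (X i (C i x))) = (\<lambda>x. adj (C j) (A (C j x)))"
  proof
    fix x
    have "(\<Sum>i<k. adj (C i) (X i (C i x))) = (\<Sum>i<k. if i = j then adj (C j) (A (C j x)) else 0)"
      using C by (intro sum.cong) (auto simp: X_def bops_zero)
    thus "(\<Sum>i<k. adj (C i) (X i (C i x))) = adj (C j) (A (C j x))"
      using \<open>j < k\<close> by simp
  qed
  moreover have "N (\<lambda>x. \<Sum>i<k. adj (C i) (X i (C i x))) \<le> Max ((\<lambda>i. N (X i)) ` {..<k})"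
  proof (rule is_M_normD[OF assms(2) _ _ unit])
    show "\<forall>i<k. X i \<in> bops \<and> C i \<in> bops"
      using assms(3) C zero_in_bops by (auto simp: X_def)
  qed (use \<open>j < k\<close> in simp)
  moreover have "Max ((\<lambda>i. N (X i)) ` {..<k}) \<le> N A"
    using \<open>j < k\<close> bop_norm_nonneg[OF assms(1,3)] bop_norm_zero[OF assms(1)]
    by (intro Max.boundedI) (auto simp: X_def)
  ultimately show ?thesis by simp
qed

lemma projection_partition_of_unity_adjoint:
  fixes E :: "'a::chilbert_space \<Rightarrow> 'a"
  assumes "E \<in> bops" "E \<circ> E = E" "adj E = E" "has_adjoint E"
  obtains k C where "0 < (k::nat)" "C 0 = E" "\<forall>i<k. C i \<in> bops \<and> adj (C i) \<in> bops"
    "\<forall>x. (\<Sum>i<k. adj (C i) (C i x)) = x"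
proof -
  define F where "F = (\<lambda>x. x - E x)"
  have F: "F \<in> bops" unfolding F_def by (rule bops_id_minus[OF assms(1)])
  have "cinner (F x) y = cinner x (F y)" for x y
    using has_adjointD(2)[OF assms(4)] assms(3)
    by (simp add: F_def cinner_diff_left cinner_diff_right)
  hence adjF: "adj F = F" by (rule adj_eqI[OF F])
  have EE: "E (E x) = E x" for x using fun_cong[OF assms(2)] by simp
  define C where "C = (\<lambda>i::nat. if i = 0 then E else F)"
  show ?thesis
  proof (rule that[of 2 C])
    have "F (F x) = F x" "E x + F x = x" for x
      by (simp_all add: F_def EE bops_diff[OF assms(1)])
    thus "\<forall>x. (\<Sum>i<2. adj (C i) (C i x)) = x"
      by (simp add: C_def numeral_2_eq_2 assms(3) adjF EE)
  qed (use assms F adjF in \<open>auto simp: C_def\<close>)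
qed

text \<open>If \<open>E\<close> has no genuine adjoint, \<open>adj E = E\<close> is a junk value shared with \<open>adj (-E)\<close>,
  so the family \<open>E, -E, I\<close> satisfies \<open>E E + E (-E) + I = I\<close>.\<close>

lemma projection_partition_of_unity_no_adjoint:
  fixes E :: "'a::chilbert_space \<Rightarrow> 'a"
  assumes "E \<in> bops" "adj E = E" "\<not> has_adjoint E"
  obtains k C where "0 < (k::nat)" "C 0 = E" "\<forall>i<k. C i \<in> bops \<and> adj (C i) \<in> bops"
    "\<forall>x. (\<Sum>i<k. adj (C i) (C i x)) = x"
proof -
  define C where "C = (\<lambda>i::nat. if i = 0 then E else if i = 1 then (\<lambda>x. - E x) else (\<lambda>x. x))"
  have adjm: "adj (\<lambda>x. - E x) = E" using adj_uminus_no_adjoint[OF assms(3)] assms(2) by simp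
  show ?thesis
  proof (rule that[of 3 C])
    show "\<forall>i<3. C i \<in> bops \<and> adj (C i) \<in> bops"
      using assms(1) bops_uminus[OF assms(1)] id_in_bops
      by (auto simp: C_def numeral_3_eq_3 less_Suc_eq assms(2) adjm adj_id)
    show "\<forall>x. (\<Sum>i<3. adj (C i) (C i x)) = x"
      by (simp add: C_def numeral_3_eq_3 assms(2) adjm adj_id bops_minus[OF assms(1)])
  qed (simp_all add: C_def)
qed

theorem lemma2p8:
  fixes N :: "('a::chilbert_space \<Rightarrow> 'a) \<Rightarrow> real"
    and E A :: "'a \<Rightarrow> 'a"
  assumes "is_bop_norm N"
    and "is_L_norm N \<or> is_M_norm N"
    and "E \<in> bops" and "E \<circ> E = E" and "adj E = E"
    and "A \<in> bops"
  shows "N (E \<circ> A \<circ> E) \<le> N A"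
proof -
  obtain k C where "0 < (k::nat)" "C 0 = E" and C: "\<forall>i<k. C i \<in> bops \<and> adj (C i) \<in> bops"
    and unit: "\<forall>x. (\<Sum>i<k. adj (C i) (C i x)) = x"
    using projection_partition_of_unity_adjoint[OF assms(3-5)]
      projection_partition_of_unity_no_adjoint[OF assms(3,5)] by metis
  have "E \<circ> A \<circ> E = (\<lambda>x. C 0 (A (adj (C 0) x)))"
       "E \<circ> A \<circ> E = (\<lambda>x. adj (C 0) (A (C 0 x)))"
    using \<open>C 0 = E\<close> assms(5) by auto
  with assms(2) show ?thesis
    using L_norm_term_le[OF assms(1) _ assms(6) C unit \<open>0 < k\<close>]
      M_norm_term_le[OF assms(1) _ assms(6) C unit \<open>0 < k\<close>] by auto
qed

end
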